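(* Let $d,n\ge 1$, let $\mathbf{x}_1,\ldots,\mathbf{x}_n\in\mathbb{R}^d$ (column vectors), $y_1,\ldots,y_n\in\mathbb{R}$, $\eta>0$, and $\mathbf{w}^{(0)}\in\mathbb{R}^{1\times d}$ arbitrary. Consider the linear self-attention layer acting on a sequence $(\mathbf{z}_1,\ldots,\mathbf{z}_n)$ of vectors in $\mathbb{R}^{d+1}$ by $$\mathbf{z}_j\leftarrow \mathbf{z}_j+\mathbf{P}\mathbf{V}\sum_{i=1}^n \mathbf{z}_i\left(\mathbf{z}_i^\top\mathbf{K}^\top\mathbf{Q}\mathbf{z}_j\right),\qquad j=1,\ldots,n,$$ with parameters $$\mathbf{K}=\mathbf{Q}=\begin{pmatrix}\mathbf{I}_{d\times d}&\mathbf{0}\\ 0&0\end{pmatrix},\quad \mathbf{V}=\begin{pmatrix}\mathbf{0}_{d\times d}&\mathbf{0}\\ \mathbf{w}^{(0)}&-1\end{pmatrix},\quad \mathbf{P}=\frac{\eta}{n}\mathbf{I}.$$ Apply $l$ such layers in succession (all with these same parameters) to the input $\mathbf{z}_j^{(0)}=(\mathbf{x}_j^\top,y_j)^\top$, $j=1,\ldots,n$, and denote by $\mathbf{z}_j^{(l)}$ the output of the $l$-th layer. Define $\mathbf{w}^{(l)}$ for $l\ge1$ by $$\mathbf{w}^{(l)}=\mathbf{w}^{(l-1)}+\frac{\eta}{n}\sum_{i=1}^n\left(y_i-\mathbf{w}^{(l-1)}\mathbf{x}_i\right)\mathbf{x}_i^\top.$$ Then for every $l\ge 0$ and every $j$,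 $\mathbf{z}_j^{(l)}=(\mathbf{x}_j^\top,\delta_j^{(l)})^\top$ where $\delta_j^{(l)}=y_j-(\mathbf{w}^{(l)}-\mathbf{w}^{(0)})\mathbf{x}_j$.
   Context: Weight vectors are $1\times d$ row vectors and inputs are $d\times 1$ column vectors, so $\mathbf{w}\mathbf{x}_i$ is a scalar. The recursion for $\mathbf{w}^{(l)}$ is gradient descent with step size $\eta$, started at $\mathbf{w}^{(0)}$, on the least-squares loss $\frac{1}{2n}\sum_{i=1}^n(\mathbf{w}\mathbf{x}_i-y_i)^2$. *)

theory Defs
  imports "HOL-Analysis.Analysis"
begin

text \<open>R^(d+1) is modelled as real^('d + unit): indices Inl k (k in 'd) are the first d
  coordinates, Inr () is the last coordinate.\<close>

definition stack :: "real^'d \<Rightarrow> real \<Rightarrow> real^('d::finite + unit)" where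
  "stack x t = (\<chi> i. case i of Inl k \<Rightarrow> x $ k | Inr _ \<Rightarrow> t)"

definition KQ_mat :: "real^('d::finite + unit)^('d + unit)" where
  "KQ_mat = (\<chi> i j. if i = j \<and> (\<exists>k. i = Inl k) then 1 else 0)"

definition V_mat :: "real^'d \<Rightarrow> real^('d::finite + unit)^('d + unit)" where
  "V_mat w0 = (\<chi> i j. case i of Inl _ \<Rightarrow> 0
                    | Inr _ \<Rightarrow> (case j of Inl k \<Rightarrow> w0 $ k | Inr _ \<Rightarrow> -1))"

definition P_mat :: "real \<Rightarrow> nat \<Rightarrow> real^'m^'m" where
  "P_mat \<eta> n = (\<eta> / real n) *\<^sub>R mat 1"

definition lsa_layer ::
  "real^'m^'m \<Rightarrow> real^'m^'m \<Rightarrow> real^'m^'m \<Rightarrow> real^'m^'m \<Rightarrow> nat \<Rightarrow>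
   (nat \<Rightarrow> real^'m) \<Rightarrow> (nat \<Rightarrow> real^'m)" where
  "lsa_layer K Q V P n z = (\<lambda>j. z j + (P ** V) *v
      (\<Sum>i\<in>{1..n}. (z i \<bullet> ((transpose K ** Q) *v z j)) *\<^sub>R z i))"

text \<open>Gradient descent iterates; the row vector w is represented by real^'d and
  w x is the inner product w \<bullet> x.\<close>
primrec gd_iter :: "real^'d \<Rightarrow> real \<Rightarrow> nat \<Rightarrow> (nat \<Rightarrow> real^'d) \<Rightarrow> (nat \<Rightarrow> real) \<Rightarrow> nat \<Rightarrow> real^'d" where
  "gd_iter w0 \<eta> n x y 0 = w0"
| "gd_iter w0 \<eta> n x y (Suc l) =
     gd_iter w0 \<eta> n x y l +
       (\<eta> / real n) *\<^sub>R (\<Sum>i\<in>{1..n}. (y i - gd_iter w0 \<eta> n x y l \<bullet> x i) *\<^sub>R x i)"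

end

theory Submission
  imports Defs
begin

text \<open>Since \<open>K\<^sup>T Q\<close> projects onto the first \<open>d\<close> coordinates and the first \<open>d\<close> rows of
  \<open>V\<close> vanish, a layer leaves the \<open>x\<close>-part of every token untouched and changes its last
  coordinate \<open>t\<^sub>j\<close> by \<open>-(\<eta>/n) \<Sum>\<^sub>i (t\<^sub>i - w0 x\<^sub>i) x\<^sub>i\<^sup>T x\<^sub>j\<close>. If \<open>t\<^sub>i = y\<^sub>i - (w - w0) x\<^sub>i\<close>, then
  \<open>t\<^sub>i - w0 x\<^sub>i = y\<^sub>i - w x\<^sub>i\<close> is the residual of \<open>w\<close>, so the change is exactly that caused by
  one gradient step on \<open>w\<close>; induction on the number of layers finishes the proof.\<close>

lemma sum_UNIV_Plus_unit:
  fixes f :: "('d::finite + unit) \<Rightarrow> 'a::comm_monoid_add"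
  shows "(\<Sum>i\<in>UNIV. f i) = (\<Sum>k\<in>UNIV. f (Inl k)) + f (Inr ())"
  using sum.Plus[of "UNIV :: 'd set" "UNIV :: unit set" f, unfolded UNIV_Plus_UNIV] by (simp add: UNIV_unit)

definition upper :: "real^('d::finite + unit) \<Rightarrow> real^'d" where
  "upper v = (\<chi> k. v $ Inl k)"

lemma stack_Inl [simp]: "stack a t $ Inl k = a $ k"
  by (simp add: stack_def)

lemma stack_Inr [simp]: "stack a t $ Inr u = t"
  by (simp add: stack_def)

lemma upper_stack [simp]: "upper (stack a t) = a"
  by (simp add: upper_def vec_eq_iff)

lemma stack_eq_iff: "v = stack a t \<longleftrightarrow> (\<forall>k. v $ Inl k = a $ k) \<and> v $ Inr () = t"
  by (auto simp: vec_eq_iff) (metis stack_Inl stack_Inr sum.exhaust old.unit.exhaust)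

lemma inner_stack: "stack a s \<bullet> stack b t = a \<bullet> b + s * t"
  by (simp add: inner_vec_def sum_UNIV_Plus_unit)

lemma stack_add: "stack a s + stack b t = stack (a + b) (s + t)"
  by (simp add: stack_eq_iff)

lemma scaleR_stack: "c *\<^sub>R stack a t = stack (c *\<^sub>R a) (c * t)"
  by (simp add: stack_eq_iff)

lemma sum_stack: "(\<Sum>i\<in>A. stack (a i) (t i)) = stack (\<Sum>i\<in>A. a i) (\<Sum>i\<in>A. t i)"
  by (simp add: stack_eq_iff sum_component)

lemma KQ_mat_mult_vec: "KQ_mat *v v = stack (upper v) 0"
  by (auto simp: stack_eq_iff matrix_vector_mult_def sum_UNIV_Plus_unit KQ_mat_def upper_def
      if_distrib[of "\<lambda>c. c * _"] cong: if_cong)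

lemma transpose_KQ_mat: "transpose KQ_mat = KQ_mat"
  by (auto simp: transpose_def KQ_mat_def vec_eq_iff)

lemma V_mat_mult_vec: "V_mat w0 *v v = stack 0 (w0 \<bullet> upper v - v $ Inr ())"
  by (auto simp: stack_eq_iff matrix_vector_mult_def V_mat_def sum_UNIV_Plus_unit
      inner_vec_def upper_def mult.commute)

lemma P_mat_mult_vec: "(P_mat \<eta> n ** M) *v v = (\<eta> / real n) *\<^sub>R (M *v v)"
  by (simp add: P_mat_def matrix_vector_mul_assoc[symmetric]
      scaleR_matrix_vector_assoc[symmetric])

lemma lsa_layer_stack:
  "lsa_layer KQ_mat KQ_mat (V_mat w0) (P_mat \<eta> n) n (\<lambda>i. stack (x i) (t i)) j
     = stack (x j) (t j - (\<eta> / real n) * (\<Sum>i\<in>{1..n}. (t i - w0 \<bullet> x i) * (x i \<bullet> x j)))"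
proof -
  have attention: "(transpose KQ_mat ** KQ_mat) *v stack (x j) (t j) = stack (x j) 0"
    by (simp add: transpose_KQ_mat matrix_vector_mul_assoc[symmetric] KQ_mat_mult_vec)
  have "w0 \<bullet> (\<Sum>i\<in>{1..n}. (x i \<bullet> x j) *\<^sub>R x i) - (\<Sum>i\<in>{1..n}. (x i \<bullet> x j) * t i)
      = - (\<Sum>i\<in>{1..n}. (t i - w0 \<bullet> x i) * (x i \<bullet> x j))"
    by (simp add: inner_sum_right sum_subtractf[symmetric] sum_negf[symmetric] algebra_simps)
  then show ?thesis
    by (simp add: lsa_layer_def attention inner_stack sum_stack P_mat_mult_vec
        V_mat_mult_vec scaleR_stack stack_add)
qed

lemma lsa_layer_gd_step:
  fixes x :: "nat \<Rightarrow> real^'d::finite"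
  shows "lsa_layer KQ_mat KQ_mat (V_mat w0) (P_mat \<eta> n) n
           (\<lambda>i. stack (x i) (y i - (w - w0) \<bullet> x i))
       = (\<lambda>j. stack (x j)
           (y j - (w + (\<eta> / real n) *\<^sub>R (\<Sum>i\<in>{1..n}. (y i - w \<bullet> x i) *\<^sub>R x i) - w0) \<bullet> x j))"
proof
  fix j
  have "(\<Sum>i\<in>{1..n}. (y i - (w - w0) \<bullet> x i - w0 \<bullet> x i) * (x i \<bullet> x j))
      = (\<Sum>i\<in>{1..n}. (y i - w \<bullet> x i) *\<^sub>R x i) \<bullet> x j"
    by (simp add: inner_sum_left algebra_simps)
  then show "lsa_layer KQ_mat KQ_mat (V_mat w0) (P_mat \<eta> n) n
           (\<lambda>i. stack (x i) (y i - (w - w0) \<bullet> x i)) j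
       = stack (x j)
           (y j - (w + (\<eta> / real n) *\<^sub>R (\<Sum>i\<in>{1..n}. (y i - w \<bullet> x i) *\<^sub>R x i) - w0) \<bullet> x j)"
    by (simp add: lsa_layer_stack algebra_simps)
qed

lemma lsa_layer_funpow_gd_iter:
  fixes x :: "nat \<Rightarrow> real^'d::finite"
  shows "(lsa_layer KQ_mat KQ_mat (V_mat w0) (P_mat \<eta> n) n ^^ l) (\<lambda>i. stack (x i) (y i))
       = (\<lambda>j. stack (x j) (y j - (gd_iter w0 \<eta> n x y l - w0) \<bullet> x j))"
proof (induction l)
  case 0
  then show ?case by simp
next
  case (Suc l)
  then show ?case by (simp add: lsa_layer_gd_step)
qed

theorem proposition6:
  fixes n :: nat and x :: "nat \<Rightarrow> real^'d::finite" and y :: "nat \<Rightarrow> real"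
    and \<eta> :: real and w0 :: "real^'d" and l j :: nat
  assumes "n \<ge> 1" and "\<eta> > 0" and "j \<in> {1..n}"
  shows "((lsa_layer KQ_mat KQ_mat (V_mat w0) (P_mat \<eta> n) n) ^^ l)
            (\<lambda>i. stack (x i) (y i)) j
         = stack (x j) (y j - (gd_iter w0 \<eta> n x y l - w0) \<bullet> x j)"
  by (simp add: lsa_layer_funpow_gd_iter)

end
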